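(* Let $A$ be a super von Neumann algebra whose graded center is $\mathbb{C}\cdot\mathbf{1}$. Then the ungraded center $Z^{\mathrm{un}}(A)$ is a graded subalgebra of $A$, and it is isomorphic, as a super algebra, either to $\mathbb{C}$ (trivially graded) or to $\mathbb{C}\oplus\mathbb{C}$ with grading automorphism swapping the two summands.
   Context: A super von Neumann algebra is a von Neumann algebra $A$ with a normal involutive $*$-automorphism $\gamma$, giving the grading $A=A^0\oplus A^1$ with $A^iA^j\subseteq A^{i+j}$. The graded center is $\{a\in A: [a,b]=0\ \forall b\in A\}$, where $[a,b]=ab-(-1)^{|a||b|}ba$ for homogeneous $a,b$, extended bilinearly. A super von Neumann algebra with graded center $\mathbb{C}$ is called a super factor. *)

theory Defs
  imports "HOL-Analysis.Analysis"
begin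

text \<open>Concrete model of a complex Hilbert space: \<open>\<ell>\<^sup>2(I)\<close> for an arbitrary index type \<open>'i\<close>
  (every complex Hilbert space is unitarily isomorphic to one of these).
  Vectors are functions \<open>'i \<Rightarrow> complex\<close>; operators are functions on vectors,
  normalised to vanish outside \<open>\<ell>\<^sup>2\<close>.\<close>

type_synonym 'i vec = "'i \<Rightarrow> complex"
type_synonym 'i op = "'i vec \<Rightarrow> 'i vec"

definition l2 :: "'i vec set" where
  "l2 = {f. (\<lambda>i. (cmod (f i))\<^sup>2) summable_on UNIV}"

definition l2norm :: "'i vec \<Rightarrow> real" where
  "l2norm f = sqrt (infsum (\<lambda>i. (cmod (f i))\<^sup>2) UNIV)"

definition ip :: "'i vec \<Rightarrow> 'i vec \<Rightarrow> complex" where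
  "ip f g = infsum (\<lambda>i. cnj (f i) * g i) UNIV"

definition bounded_op :: "'i op \<Rightarrow> bool" where
  "bounded_op T \<longleftrightarrow>
     (\<forall>f\<in>l2. T f \<in> l2) \<and>
     (\<forall>f\<in>l2. \<forall>g\<in>l2. \<forall>a b. T (\<lambda>i. a * f i + b * g i) = (\<lambda>i. a * T f i + b * T g i)) \<and>
     (\<exists>K. \<forall>f\<in>l2. l2norm (T f) \<le> K * l2norm f) \<and>
     (\<forall>f. f \<notin> l2 \<longrightarrow> T f = (\<lambda>i. 0))"

definition Bnd :: "'i op set" where "Bnd = {T. bounded_op T}"

definition op_id :: "'i op" where "op_id = (\<lambda>f. if f \<in> l2 then f else (\<lambda>i. 0))"
definition op_zero :: "'i op" where "op_zero = (\<lambda>f i. 0)"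
definition op_add :: "'i op \<Rightarrow> 'i op \<Rightarrow> 'i op" where "op_add S T = (\<lambda>f i. S f i + T f i)"
definition op_smult :: "complex \<Rightarrow> 'i op \<Rightarrow> 'i op" where "op_smult c T = (\<lambda>f i. c * T f i)"
definition op_mult :: "'i op \<Rightarrow> 'i op \<Rightarrow> 'i op" where "op_mult S T = S \<circ> T"

definition is_adjoint :: "'i op \<Rightarrow> 'i op \<Rightarrow> bool" where
  "is_adjoint T S \<longleftrightarrow> S \<in> Bnd \<and> (\<forall>f\<in>l2. \<forall>g\<in>l2. ip (T f) g = ip f (S g))"

definition self_adjoint :: "'i op \<Rightarrow> bool" where
  "self_adjoint T \<longleftrightarrow> T \<in> Bnd \<and> is_adjoint T T"

definition commutant :: "'i op set \<Rightarrow> 'i op set" where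
  "commutant S = {T \<in> Bnd. \<forall>s\<in>S. op_mult T s = op_mult s T}"

definition von_neumann_algebra :: "'i op set \<Rightarrow> bool" where
  "von_neumann_algebra M \<longleftrightarrow> M \<subseteq> Bnd \<and> op_id \<in> M \<and>
     (\<forall>T\<in>M. \<exists>S\<in>M. is_adjoint T S) \<and> commutant (commutant M) = M"

definition op_le :: "'i op \<Rightarrow> 'i op \<Rightarrow> bool" where
  "op_le A B \<longleftrightarrow> (\<forall>f\<in>l2. Re (ip f (B f)) - Re (ip f (A f)) \<ge> 0)"

definition op_sup :: "'i op set \<Rightarrow> 'i op \<Rightarrow> bool" where
  "op_sup S X \<longleftrightarrow> self_adjoint X \<and> (\<forall>s\<in>S. op_le s X) \<and>
     (\<forall>Y. self_adjoint Y \<and> (\<forall>s\<in>S. op_le s Y) \<longrightarrow> op_le X Y)"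

text \<open>Normality: preservation of suprema of bounded increasing nets of self-adjoint elements
  (a net is represented by its range, a nonempty upward directed set).\<close>
definition normal_map :: "'i op set \<Rightarrow> ('i op \<Rightarrow> 'i op) \<Rightarrow> bool" where
  "normal_map M \<gamma> \<longleftrightarrow>
     (\<forall>S X. S \<subseteq> M \<and> S \<noteq> {} \<and> (\<forall>s\<in>S. self_adjoint s) \<and>
            (\<forall>a\<in>S. \<forall>b\<in>S. \<exists>c\<in>S. op_le a c \<and> op_le b c) \<and> X \<in> M \<and> op_sup S X
        \<longrightarrow> op_sup (\<gamma> ` S) (\<gamma> X))"

definition star_automorphism :: "'i op set \<Rightarrow> ('i op \<Rightarrow> 'i op) \<Rightarrow> bool" where
  "star_automorphism M \<gamma> \<longleftrightarrow> bij_betw \<gamma> M M \<and>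
     (\<forall>a\<in>M. \<forall>b\<in>M. \<gamma> (op_add a b) = op_add (\<gamma> a) (\<gamma> b)) \<and>
     (\<forall>c. \<forall>a\<in>M. \<gamma> (op_smult c a) = op_smult c (\<gamma> a)) \<and>
     (\<forall>a\<in>M. \<forall>b\<in>M. \<gamma> (op_mult a b) = op_mult (\<gamma> a) (\<gamma> b)) \<and>
     \<gamma> op_id = op_id \<and>
     (\<forall>a\<in>M. \<forall>b\<in>M. is_adjoint a b \<longrightarrow> is_adjoint (\<gamma> a) (\<gamma> b))"

definition super_vN_algebra :: "'i op set \<Rightarrow> ('i op \<Rightarrow> 'i op) \<Rightarrow> bool" where
  "super_vN_algebra M \<gamma> \<longleftrightarrow> von_neumann_algebra M \<and> star_automorphism M \<gamma> \<and>
     normal_map M \<gamma> \<and> (\<forall>a\<in>M. \<gamma> (\<gamma> a) = a)"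

definition even_part :: "('i op \<Rightarrow> 'i op) \<Rightarrow> 'i op \<Rightarrow> 'i op" where
  "even_part \<gamma> a = op_smult (1/2) (op_add a (\<gamma> a))"
definition odd_part :: "('i op \<Rightarrow> 'i op) \<Rightarrow> 'i op \<Rightarrow> 'i op" where
  "odd_part \<gamma> a = op_smult (1/2) (op_add a (op_smult (-1) (\<gamma> a)))"

definition op_comm :: "'i op \<Rightarrow> 'i op \<Rightarrow> 'i op" where
  "op_comm a b = op_add (op_mult a b) (op_smult (-1) (op_mult b a))"
definition op_anticomm :: "'i op \<Rightarrow> 'i op \<Rightarrow> 'i op" where
  "op_anticomm a b = op_add (op_mult a b) (op_mult b a)"

text \<open>Graded commutator, extended bilinearly from homogeneous elements.\<close>
definition super_comm :: "('i op \<Rightarrow> 'i op) \<Rightarrow> 'i op \<Rightarrow> 'i op \<Rightarrow> 'i op" where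
  "super_comm \<gamma> a b =
    (let a0 = even_part \<gamma> a; a1 = odd_part \<gamma> a; b0 = even_part \<gamma> b; b1 = odd_part \<gamma> b
     in op_add (op_add (op_comm a0 b0) (op_comm a0 b1))
               (op_add (op_comm a1 b0) (op_anticomm a1 b1)))"

definition graded_center :: "'i op set \<Rightarrow> ('i op \<Rightarrow> 'i op) \<Rightarrow> 'i op set" where
  "graded_center M \<gamma> = {a \<in> M. \<forall>b\<in>M. super_comm \<gamma> a b = op_zero}"

definition ungraded_center :: "'i op set \<Rightarrow> 'i op set" where
  "ungraded_center M = {a \<in> M. \<forall>b\<in>M. op_mult a b = op_mult b a}"

text \<open>A graded subalgebra: a unital subalgebra closed under the grading automorphism
  (equivalently, containing the homogeneous components of its elements).\<close>
definition graded_subalgebra :: "'i op set \<Rightarrow> ('i op \<Rightarrow> 'i op) \<Rightarrow> 'i op set \<Rightarrow> bool" where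
  "graded_subalgebra M \<gamma> Z \<longleftrightarrow> Z \<subseteq> M \<and> op_id \<in> Z \<and>
     (\<forall>a\<in>Z. \<forall>b\<in>Z. op_add a b \<in> Z \<and> op_mult a b \<in> Z) \<and>
     (\<forall>c. \<forall>a\<in>Z. op_smult c a \<in> Z) \<and> (\<forall>a\<in>Z. \<gamma> a \<in> Z)"

definition super_alg_iso :: "'i op set \<Rightarrow> ('i op \<Rightarrow> 'i op) \<Rightarrow>
    ('b \<Rightarrow> 'b \<Rightarrow> 'b) \<Rightarrow> ('b \<Rightarrow> 'b \<Rightarrow> 'b) \<Rightarrow> (complex \<Rightarrow> 'b \<Rightarrow> 'b) \<Rightarrow> 'b \<Rightarrow> ('b \<Rightarrow> 'b)
    \<Rightarrow> ('i op \<Rightarrow> 'b) \<Rightarrow> bool" where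
  "super_alg_iso Z \<gamma> add mul sm one \<delta> \<phi> \<longleftrightarrow> bij_betw \<phi> Z UNIV \<and>
     (\<forall>a\<in>Z. \<forall>b\<in>Z. \<phi> (op_add a b) = add (\<phi> a) (\<phi> b) \<and> \<phi> (op_mult a b) = mul (\<phi> a) (\<phi> b)) \<and>
     (\<forall>c. \<forall>a\<in>Z. \<phi> (op_smult c a) = sm c (\<phi> a)) \<and> \<phi> op_id = one \<and>
     (\<forall>a\<in>Z. \<phi> (\<gamma> a) = \<delta> (\<phi> a))"

definition iso_to_C :: "'i op set \<Rightarrow> ('i op \<Rightarrow> 'i op) \<Rightarrow> ('i op \<Rightarrow> complex) \<Rightarrow> bool" where
  "iso_to_C Z \<gamma> \<phi> \<longleftrightarrow> super_alg_iso Z \<gamma> (+) (*) (*) 1 (\<lambda>z. z) \<phi>"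

definition iso_to_CC :: "'i op set \<Rightarrow> ('i op \<Rightarrow> 'i op) \<Rightarrow> ('i op \<Rightarrow> complex \<times> complex) \<Rightarrow> bool" where
  "iso_to_CC Z \<gamma> \<phi> \<longleftrightarrow> super_alg_iso Z \<gamma>
     (\<lambda>(x, y) (u, v). (x + u, y + v)) (\<lambda>(x, y) (u, v). (x * u, y * v))
     (\<lambda>c (x, y). (c * x, c * y)) (1, 1) (\<lambda>(x, y). (y, x)) \<phi>"

end

theory Submission
  imports Defs
begin

text \<open>Write \<open>Z\<close> for the ungraded center. Its even elements supercommute with everything, so by
  hypothesis they are scalars. The odd part \<open>Z\<^sup>1\<close> is closed under adjoints, and a product of two odd
  central elements is even central, hence a scalar. For \<open>0 \<noteq> z \<in> Z\<^sup>1\<close> the scalar \<open>z z\<^sup>*\<close> is nonzero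
  (\<open>z\<^sup>* z = 0\<close> forces \<open>z = 0\<close>), hence so is \<open>z\<^sup>2\<close> (as \<open>z\<^sup>2 z\<^sup>* = z (z z\<^sup>*)\<close>), and a rescaling \<open>u\<close> of
  \<open>z\<close> satisfies \<open>u\<^sup>2 = 1\<close>. Then \<open>Z\<^sup>1 = \<complex> u\<close> and \<open>p + q u \<mapsto> (p + q, p - q)\<close> identifies \<open>Z\<close> with
  \<open>\<complex> \<oplus> \<complex>\<close>, the grading \<open>u \<mapsto> -u\<close> becoming the swap. If \<open>Z\<^sup>1 = 0\<close>, then \<open>Z = \<complex>\<close>.\<close>

section \<open>The sequence space \<open>\<ell>\<^sup>2\<close>\<close>

lemma l2_zero [simp]: "(\<lambda>i. 0) \<in> l2"
  by (simp add: l2_def)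

lemma cmod_add_sq_le: "(cmod (a + b))\<^sup>2 \<le> 2 * (cmod a)\<^sup>2 + 2 * (cmod b)\<^sup>2"
proof -
  have "(cmod (a + b))\<^sup>2 \<le> (cmod a + cmod b)\<^sup>2"
    by (simp add: norm_triangle_ineq power_mono)
  also have "\<dots> \<le> 2 * (cmod a)\<^sup>2 + 2 * (cmod b)\<^sup>2"
    using sum_squares_bound[of "cmod a" "cmod b"] by (simp add: power2_sum)
  finally show ?thesis .
qed

lemma l2_lincomb:
  assumes "f \<in> l2" "g \<in> l2"
  shows "(\<lambda>i. x * f i + y * g i) \<in> l2"
proof -
  have "(\<lambda>i. 2 * (cmod x)\<^sup>2 * (cmod (f i))\<^sup>2 + 2 * (cmod y)\<^sup>2 * (cmod (g i))\<^sup>2) summable_on UNIV"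
    using assms unfolding l2_def by (intro summable_on_add summable_on_cmult_right) auto
  then show ?thesis
    unfolding l2_def mem_Collect_eq
  proof (rule summable_on_comparison_test)
    show "(cmod (x * f i + y * g i))\<^sup>2
        \<le> 2 * (cmod x)\<^sup>2 * (cmod (f i))\<^sup>2 + 2 * (cmod y)\<^sup>2 * (cmod (g i))\<^sup>2" for i
      using cmod_add_sq_le[of "x * f i" "y * g i"] by (simp add: norm_mult power_mult_distrib)
  qed simp
qed

lemma l2_smult_cancel: "(\<lambda>i. a * f i) \<in> l2 \<Longrightarrow> a \<noteq> 0 \<Longrightarrow> f \<in> l2"
  using l2_lincomb[of "\<lambda>i. a * f i" "\<lambda>i. 0" "1/a" 0] by simp

lemma summable_on_cnj_mult:
  assumes "f \<in> l2" "g \<in> l2"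
  shows "(\<lambda>i. cnj (f i) * g i) summable_on UNIV"
proof (rule abs_summable_summable)
  have "(\<lambda>i. (cmod (f i))\<^sup>2 + (cmod (g i))\<^sup>2) summable_on UNIV"
    using assms unfolding l2_def by (intro summable_on_add) auto
  then show "(\<lambda>i. norm (cnj (f i) * g i)) summable_on UNIV"
  proof (rule summable_on_comparison_test)
    show "norm (cnj (f i) * g i) \<le> (cmod (f i))\<^sup>2 + (cmod (g i))\<^sup>2" for i
      unfolding norm_mult complex_mod_cnj
      using sum_squares_bound[of "cmod (f i)" "cmod (g i)"]
        mult_nonneg_nonneg[OF norm_ge_zero norm_ge_zero, of "f i" "g i"]
      by linarith
  qed simp
qed

lemma ip_lincomb_right:
  assumes "f \<in> l2" "g \<in> l2" "h \<in> l2"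
  shows "ip f (\<lambda>i. x * g i + y * h i) = x * ip f g + y * ip f h"
proof -
  have "ip f (\<lambda>i. x * g i + y * h i) = infsum (\<lambda>i. x * (cnj (f i) * g i) + y * (cnj (f i) * h i)) UNIV"
    unfolding ip_def by (simp add: algebra_simps)
  also have "\<dots> = x * ip f g + y * ip f h"
    unfolding ip_def using assms
    by (simp add: infsum_add summable_on_cmult_right summable_on_cnj_mult infsum_cmult_right')
  finally show ?thesis .
qed

lemma ip_cnj_swap: "ip g f = cnj (ip f g)"
  unfolding ip_def by (simp flip: infsum_cnj add: mult.commute)

lemma ip_smult_left: "ip (\<lambda>i. c * f i) g = cnj c * ip f g"
  unfolding ip_def by (simp add: infsum_cmult_right' mult.assoc)

lemma ip_smult_right: "ip f (\<lambda>i. c * g i) = c * ip f g"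
  unfolding ip_def by (simp add: infsum_cmult_right' algebra_simps)

lemma ip_zero_right [simp]: "ip f (\<lambda>i. 0) = 0"
  unfolding ip_def by simp

lemma ip_self_eq_zero:
  assumes "f \<in> l2" "ip f f = 0"
  shows "f = (\<lambda>i. 0)"
proof
  fix j
  have "cnj (f j) * f j = 0"
    using assms by (intro nonneg_infsum_le_0D_complex[where A = UNIV])
      (auto simp: ip_def summable_on_cnj_mult less_eq_complex_def)
  then show "f j = 0" by simp
qed

lemma l2_eqI:
  assumes "x \<in> l2" "y \<in> l2" "\<And>f. f \<in> l2 \<Longrightarrow> ip f x = ip f y"
  shows "x = y"
proof -
  let ?d = "\<lambda>i. 1 * x i + (-1) * y i"
  have d: "?d \<in> l2" using l2_lincomb[OF assms(1,2)] .
  have "ip ?d ?d = 1 * ip ?d x + (-1) * ip ?d y"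
    by (rule ip_lincomb_right[OF d assms(1,2)])
  then have "ip ?d ?d = 0" using assms(3)[OF d] by simp
  then have "?d = (\<lambda>i. 0)" using ip_self_eq_zero[OF d] by blast
  then show ?thesis by (simp add: fun_eq_iff)
qed

lemma l2norm_nonneg: "l2norm f \<ge> 0"
  unfolding l2norm_def by (simp add: infsum_nonneg)

lemma l2norm_smult: "f \<in> l2 \<Longrightarrow> l2norm (\<lambda>i. c * f i) = cmod c * l2norm f"
  unfolding l2norm_def l2_def
  by (simp add: norm_mult power_mult_distrib infsum_cmult_right real_sqrt_mult)

lemma l2norm_add_le:
  assumes "f \<in> l2" "g \<in> l2"
  shows "l2norm (\<lambda>i. f i + g i) \<le> 2 * (l2norm f + l2norm g)"
proof (rule power2_le_imp_le)
  have sq: "(l2norm h)\<^sup>2 = infsum (\<lambda>i. (cmod (h i))\<^sup>2) UNIV" for h :: "'a vec"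
    unfolding l2norm_def by (simp add: infsum_nonneg)
  have "(l2norm (\<lambda>i. f i + g i))\<^sup>2 \<le> infsum (\<lambda>i. 2 * (cmod (f i))\<^sup>2 + 2 * (cmod (g i))\<^sup>2) UNIV"
    unfolding sq using assms l2_lincomb[OF assms, of 1 1] unfolding l2_def
    by (intro infsum_mono summable_on_add summable_on_cmult_right) (auto intro: cmod_add_sq_le)
  also have "\<dots> = 2 * (l2norm f)\<^sup>2 + 2 * (l2norm g)\<^sup>2"
    unfolding sq using assms unfolding l2_def
    by (simp add: infsum_add summable_on_cmult_right infsum_cmult_right)
  also have "\<dots> \<le> (2 * (l2norm f + l2norm g))\<^sup>2"
    using l2norm_nonneg[of f] l2norm_nonneg[of g]
    by (simp add: power2_eq_square algebra_simps)
  finally show "(l2norm (\<lambda>i. f i + g i))\<^sup>2 \<le> (2 * (l2norm f + l2norm g))\<^sup>2" .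
qed (simp add: l2norm_nonneg)

section \<open>Bounded operators\<close>

lemma Bnd_l2: "T \<in> Bnd \<Longrightarrow> T f \<in> l2"
  unfolding Bnd_def bounded_op_def by (cases "f \<in> l2") auto

lemma Bnd_outside_l2: "T \<in> Bnd \<Longrightarrow> f \<notin> l2 \<Longrightarrow> T f = (\<lambda>i. 0)"
  unfolding Bnd_def bounded_op_def by auto

lemma Bnd_lincomb: "T \<in> Bnd \<Longrightarrow> f \<in> l2 \<Longrightarrow> g \<in> l2 \<Longrightarrow>
    T (\<lambda>i. a * f i + b * g i) = (\<lambda>i. a * T f i + b * T g i)"
  unfolding Bnd_def bounded_op_def by auto

lemma Bnd_zero_vec: "T \<in> Bnd \<Longrightarrow> T (\<lambda>i. 0) = (\<lambda>i. 0)"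
  using Bnd_lincomb[of T "\<lambda>i. 0" "\<lambda>i. 0" 0 0] by simp

lemma Bnd_add_vec: "T \<in> Bnd \<Longrightarrow> f \<in> l2 \<Longrightarrow> g \<in> l2 \<Longrightarrow> T (\<lambda>i. f i + g i) = (\<lambda>i. T f i + T g i)"
  using Bnd_lincomb[of T f g 1 1] by simp

lemma Bnd_smult_vec: "T \<in> Bnd \<Longrightarrow> T (\<lambda>i. a * f i) = (\<lambda>i. a * T f i)"
proof (cases "f \<in> l2 \<or> a = 0")
  case True
  moreover assume "T \<in> Bnd"
  ultimately show ?thesis
    using Bnd_lincomb[of T f f a 0] Bnd_zero_vec[of T] by auto
next
  case False
  moreover assume "T \<in> Bnd"
  ultimately show ?thesis
    using l2_smult_cancel[of a f] Bnd_outside_l2[of T] by auto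
qed

lemma Bnd_norm_bound:
  assumes "T \<in> Bnd"
  obtains K where "K \<ge> 0" "\<And>f. f \<in> l2 \<Longrightarrow> l2norm (T f) \<le> K * l2norm f"
proof -
  obtain K where K: "\<forall>f\<in>l2. l2norm (T f) \<le> K * l2norm f"
    using assms unfolding Bnd_def bounded_op_def by auto
  have "l2norm (T f) \<le> max K 0 * l2norm f" if "f \<in> l2" for f
  proof -
    have "K * l2norm f \<le> max K 0 * l2norm f"
      by (intro mult_right_mono) (simp_all add: l2norm_nonneg)
    then show ?thesis using K that by fastforce
  qed
  then show ?thesis using that[of "max K 0"] by simp
qed

lemma Bnd_op_id: "op_id \<in> Bnd"
  unfolding Bnd_def bounded_op_def mem_Collect_eq op_id_def
  using l2_lincomb by (auto intro!: exI[of _ 1])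

lemma Bnd_op_add:
  assumes S: "S \<in> Bnd" and T: "T \<in> Bnd"
  shows "op_add S T \<in> Bnd"
proof -
  obtain K1 where K1: "K1 \<ge> 0" "\<And>f. f \<in> l2 \<Longrightarrow> l2norm (S f) \<le> K1 * l2norm f"
    using Bnd_norm_bound[OF S] by blast
  obtain K2 where K2: "K2 \<ge> 0" "\<And>f. f \<in> l2 \<Longrightarrow> l2norm (T f) \<le> K2 * l2norm f"
    using Bnd_norm_bound[OF T] by blast
  have "l2norm (\<lambda>i. S f i + T f i) \<le> (2 * (K1 + K2)) * l2norm f" if "f \<in> l2" for f
    using l2norm_add_le[OF Bnd_l2[OF S, of f] Bnd_l2[OF T, of f]] K1(2)[OF that] K2(2)[OF that]
    by (simp add: algebra_simps)
  then have "\<exists>K. \<forall>f\<in>l2. l2norm (\<lambda>i. S f i + T f i) \<le> K * l2norm f"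
    by blast
  then show ?thesis
    unfolding Bnd_def bounded_op_def mem_Collect_eq op_add_def
    using l2_lincomb[OF Bnd_l2[OF S] Bnd_l2[OF T], where x=1 and y=1]
      Bnd_lincomb[OF S] Bnd_lincomb[OF T] Bnd_outside_l2[OF S] Bnd_outside_l2[OF T]
    by (auto simp: algebra_simps)
qed

lemma Bnd_op_smult:
  assumes T: "T \<in> Bnd"
  shows "op_smult c T \<in> Bnd"
proof -
  obtain K where K: "K \<ge> 0" "\<And>f. f \<in> l2 \<Longrightarrow> l2norm (T f) \<le> K * l2norm f"
    using Bnd_norm_bound[OF T] by blast
  have "l2norm (\<lambda>i. c * T f i) \<le> (cmod c * K) * l2norm f" if "f \<in> l2" for f
    using l2norm_smult[OF Bnd_l2[OF T]] mult_left_mono[OF K(2)[OF that] norm_ge_zero, of c]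
    by (simp add: mult.assoc)
  then have "\<exists>K. \<forall>f\<in>l2. l2norm (\<lambda>i. c * T f i) \<le> K * l2norm f"
    by blast
  then show ?thesis
    unfolding Bnd_def bounded_op_def mem_Collect_eq op_smult_def
    using l2_lincomb[OF Bnd_l2[OF T] Bnd_l2[OF T], where x=c and y=0] Bnd_lincomb[OF T] Bnd_outside_l2[OF T]
    by (auto simp: algebra_simps)
qed

lemma Bnd_op_mult:
  assumes S: "S \<in> Bnd" and T: "T \<in> Bnd"
  shows "op_mult S T \<in> Bnd"
proof -
  obtain K1 where K1: "K1 \<ge> 0" "\<And>f. f \<in> l2 \<Longrightarrow> l2norm (S f) \<le> K1 * l2norm f"
    using Bnd_norm_bound[OF S] by blast
  obtain K2 where K2: "K2 \<ge> 0" "\<And>f. f \<in> l2 \<Longrightarrow> l2norm (T f) \<le> K2 * l2norm f"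
    using Bnd_norm_bound[OF T] by blast
  have "l2norm (S (T f)) \<le> (K1 * K2) * l2norm f" if "f \<in> l2" for f
    using K1(2)[OF Bnd_l2[OF T, of f]] mult_left_mono[OF K2(2)[OF that] K1(1)]
    by (simp add: mult.assoc)
  then show ?thesis
    unfolding Bnd_def bounded_op_def mem_Collect_eq op_mult_def comp_def
    using Bnd_l2[OF S] Bnd_l2[OF T] Bnd_lincomb[OF T] Bnd_lincomb[OF S]
      Bnd_outside_l2[OF T] Bnd_zero_vec[OF S]
    by auto
qed

lemma op_smult_op_id_inj: "op_smult c (op_id :: 'i op) = op_smult d op_id \<Longrightarrow> c = d"
proof -
  define e :: "'i vec" where "e = (\<lambda>i. if i = undefined then 1 else 0)"
  have "(\<lambda>i. (cmod (e i))\<^sup>2) summable_on {undefined}"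
    by simp
  then have "e \<in> l2"
    unfolding l2_def mem_Collect_eq
    by (rule summable_on_cong_neutral[THEN iffD1, rotated -1]) (auto simp: e_def)
  moreover assume "op_smult c (op_id :: 'i op) = op_smult d op_id"
  then have "op_smult c op_id e undefined = op_smult d op_id e undefined"
    by simp
  ultimately show "c = d"
    by (simp add: op_smult_def op_id_def e_def)
qed

lemma op_mult_id_left: "T \<in> Bnd \<Longrightarrow> op_mult op_id T = T"
  by (simp add: op_mult_def op_id_def Bnd_l2 fun_eq_iff)

lemma op_mult_id_right: "T \<in> Bnd \<Longrightarrow> op_mult T op_id = T"
  by (auto simp: op_mult_def op_id_def Bnd_outside_l2 Bnd_zero_vec fun_eq_iff)

lemma op_mult_assoc: "op_mult (op_mult a b) c = op_mult a (op_mult b c)"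
  by (simp add: op_mult_def comp_assoc)

lemma op_mult_add_distrib_left:
  "a \<in> Bnd \<Longrightarrow> b \<in> Bnd \<Longrightarrow> c \<in> Bnd \<Longrightarrow> op_mult a (op_add b c) = op_add (op_mult a b) (op_mult a c)"
  by (simp add: op_mult_def op_add_def Bnd_add_vec Bnd_l2 fun_eq_iff)

lemma op_mult_add_distrib_right: "op_mult (op_add b c) a = op_add (op_mult b a) (op_mult c a)"
  by (simp add: op_mult_def op_add_def fun_eq_iff)

lemma op_mult_smult_right: "a \<in> Bnd \<Longrightarrow> op_mult a (op_smult x b) = op_smult x (op_mult a b)"
  by (simp add: op_mult_def op_smult_def Bnd_smult_vec fun_eq_iff)

lemma op_mult_smult_left: "op_mult (op_smult x b) a = op_smult x (op_mult b a)"
  by (simp add: op_mult_def op_smult_def fun_eq_iff)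

lemma op_mult_zero_left [simp]: "op_mult op_zero T = op_zero"
  by (simp add: op_mult_def op_zero_def fun_eq_iff)

lemma op_mult_zero_right: "T \<in> Bnd \<Longrightarrow> op_mult T op_zero = op_zero"
  using Bnd_zero_vec by (simp add: op_mult_def op_zero_def fun_eq_iff)

section \<open>Adjoints and commutants\<close>

lemma op_eqI_ip:
  assumes "S \<in> Bnd" "T \<in> Bnd" "\<And>f g. f \<in> l2 \<Longrightarrow> g \<in> l2 \<Longrightarrow> ip f (S g) = ip f (T g)"
  shows "S = T"
proof
  fix g
  show "S g = T g"
  proof (cases "g \<in> l2")
    case True
    then show ?thesis using assms by (intro l2_eqI Bnd_l2) auto
  qed (simp add: assms Bnd_outside_l2)
qed

lemma is_adjoint_sym: "T \<in> Bnd \<Longrightarrow> is_adjoint T S \<Longrightarrow> is_adjoint S T"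
  unfolding is_adjoint_def by (metis ip_cnj_swap)

lemma is_adjoint_unique: "is_adjoint T S \<Longrightarrow> is_adjoint T S' \<Longrightarrow> S = S'"
  unfolding is_adjoint_def by (auto intro: op_eqI_ip)

lemma is_adjoint_op_mult:
  assumes "b \<in> Bnd" "is_adjoint a A" "is_adjoint b B"
  shows "is_adjoint (op_mult a b) (op_mult B A)"
  using assms Bnd_op_mult[of B A] unfolding is_adjoint_def op_mult_def by (simp add: Bnd_l2)

lemma is_adjoint_op_smult: "is_adjoint T S \<Longrightarrow> is_adjoint (op_smult c T) (op_smult (cnj c) S)"
  unfolding is_adjoint_def op_smult_def
  using Bnd_op_smult[of S "cnj c"] by (simp add: ip_smult_left ip_smult_right op_smult_def)

lemma adjoint_mult_eq_zero_imp_zero: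
  assumes "T \<in> Bnd" "is_adjoint T S" "op_mult S T = op_zero"
  shows "T = op_zero"
proof
  fix f
  show "T f = op_zero f"
  proof (cases "f \<in> l2")
    case True
    have "ip (T f) (T f) = ip f (S (T f))"
      using assms(2) True Bnd_l2[OF assms(1)] by (simp add: is_adjoint_def)
    also have "\<dots> = 0"
      using fun_cong[OF assms(3), of f] by (simp add: op_mult_def op_zero_def)
    finally show ?thesis
      using ip_self_eq_zero[OF Bnd_l2[OF assms(1)]] by (simp add: op_zero_def)
  qed (simp add: Bnd_outside_l2[OF assms(1)] op_zero_def)
qed

lemma commutant_subset_Bnd: "commutant S \<subseteq> Bnd"
  by (auto simp: commutant_def)

lemma commutant_op_add:
  assumes "S \<subseteq> Bnd" "a \<in> commutant S" "b \<in> commutant S"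
  shows "op_add a b \<in> commutant S"
  using assms Bnd_op_add
  by (auto simp: commutant_def op_mult_add_distrib_right op_mult_add_distrib_left subset_iff)

lemma commutant_op_smult:
  assumes "S \<subseteq> Bnd" "a \<in> commutant S"
  shows "op_smult x a \<in> commutant S"
  using assms Bnd_op_smult
  by (auto simp: commutant_def op_mult_smult_left op_mult_smult_right subset_iff)

lemma commutant_op_mult:
  assumes "a \<in> commutant S" "b \<in> commutant S"
  shows "op_mult a b \<in> commutant S"
  using assms Bnd_op_mult by (auto simp: commutant_def) (metis op_mult_assoc)

section \<open>Centers of super von Neumann algebras\<close>

lemma super_alg_iso_inv_into:
  assumes bij: "bij_betw \<psi> UNIV Z"
    and hom_add: "\<And>x y. \<psi> (add x y) = op_add (\<psi> x) (\<psi> y)"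
    and hom_mult: "\<And>x y. \<psi> (mul x y) = op_mult (\<psi> x) (\<psi> y)"
    and hom_smult: "\<And>c x. \<psi> (sm c x) = op_smult c (\<psi> x)"
    and hom_one: "\<psi> one = op_id"
    and hom_grading: "\<And>x. \<gamma> (\<psi> x) = \<psi> (\<delta> x)"
  shows "super_alg_iso Z \<gamma> add mul sm one \<delta> (inv_into UNIV \<psi>)"
proof -
  have inv: "inv_into UNIV \<psi> (\<psi> x) = x" for x
    using bij by (simp add: bij_betw_def)
  have Z: "Z = range \<psi>"
    using bij by (simp add: bij_betw_def)
  show ?thesis
    unfolding super_alg_iso_def
    using bij_betw_inv_into[OF bij]
    by (auto simp: Z inv hom_grading simp flip: hom_add hom_mult hom_smult hom_one)
qed

definition op_comb :: "complex \<Rightarrow> complex \<Rightarrow> 'i op \<Rightarrow> 'i op" where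
  "op_comb p q u = op_add (op_smult p op_id) (op_smult q u)"

lemma op_comb_add: "op_add (op_comb p q u) (op_comb p' q' u) = op_comb (p + p') (q + q') u"
  by (simp add: op_comb_def op_add_def op_smult_def fun_eq_iff algebra_simps)

lemma op_comb_smult: "op_smult c (op_comb p q u) = op_comb (c * p) (c * q) u"
  by (simp add: op_comb_def op_add_def op_smult_def fun_eq_iff algebra_simps)

lemma op_id_eq_op_comb: "op_id = op_comb 1 0 u"
  by (simp add: op_comb_def op_add_def op_smult_def fun_eq_iff)

lemma op_comb_mult:
  assumes u: "u \<in> Bnd" "op_mult u u = op_id"
  shows "op_mult (op_comb p q u) (op_comb p' q' u) = op_comb (p * p' + q * q') (p * q' + q * p') u"
proof -
  have "op_mult u (op_comb p' q' u) = op_comb q' p' u"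
    unfolding op_comb_def using u
    by (simp add: Bnd_op_smult Bnd_op_id op_mult_add_distrib_left op_mult_smult_right op_mult_id_right)
       (simp add: op_add_def op_smult_def fun_eq_iff)
  moreover have "op_comb p' q' u \<in> Bnd"
    unfolding op_comb_def using u by (intro Bnd_op_add Bnd_op_smult Bnd_op_id)
  ultimately show ?thesis
    by (simp add: op_comb_def[of p q] op_mult_add_distrib_right op_mult_smult_left op_mult_id_left)
       (simp add: op_comb_def op_add_def op_smult_def fun_eq_iff algebra_simps)
qed

text \<open>For \<open>u\<^sup>2 = 1\<close> this is \<open>(s, t) \<mapsto> s e\<^sub>1 + t e\<^sub>2\<close> with the complementary idempotents
  \<open>e\<^sub>1 = (1 + u) / 2\<close> and \<open>e\<^sub>2 = (1 - u) / 2\<close>.\<close>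
definition CC_embed :: "'i op \<Rightarrow> complex \<times> complex \<Rightarrow> 'i op" where
  "CC_embed u x = op_comb ((fst x + snd x) / 2) ((fst x - snd x) / 2) u"

lemma op_comb_eq_CC_embed: "op_comb p q u = CC_embed u (p + q, p - q)"
  by (simp add: CC_embed_def)

lemma CC_embed_add: "CC_embed u (s + s', t + t') = op_add (CC_embed u (s, t)) (CC_embed u (s', t'))"
  by (simp add: CC_embed_def op_comb_add)
     (intro arg_cong2[where f = "\<lambda>p q. op_comb p q u"]; simp add: field_simps)

lemma CC_embed_smult: "CC_embed u (c * s, c * t) = op_smult c (CC_embed u (s, t))"
  by (simp add: CC_embed_def op_comb_smult)
     (intro arg_cong2[where f = "\<lambda>p q. op_comb p q u"]; simp add: field_simps)

lemma CC_embed_mult: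
  assumes "u \<in> Bnd" "op_mult u u = op_id"
  shows "CC_embed u (s * s', t * t') = op_mult (CC_embed u (s, t)) (CC_embed u (s', t'))"
  by (simp add: CC_embed_def op_comb_mult[OF assms])
     (intro arg_cong2[where f = "\<lambda>p q. op_comb p q u"]; simp add: field_simps)

lemma CC_embed_one: "CC_embed u (1, 1) = op_id"
  by (simp add: CC_embed_def flip: op_id_eq_op_comb)

lemma even_part_add_odd_part: "op_add (even_part \<gamma> a) (odd_part \<gamma> a) = a"
  by (simp add: even_part_def odd_part_def op_smult_def op_add_def fun_eq_iff algebra_simps)

locale vN_alg =
  fixes M :: "'i op set"
  assumes von_neumann: "von_neumann_algebra M"
begin

lemma in_Bnd: "a \<in> M \<Longrightarrow> a \<in> Bnd"
  using von_neumann unfolding von_neumann_algebra_def by auto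

lemma op_id_mem: "op_id \<in> M"
  using von_neumann unfolding von_neumann_algebra_def by auto

lemma adjoint_mem: "a \<in> M \<Longrightarrow> \<exists>S\<in>M. is_adjoint a S"
  using von_neumann unfolding von_neumann_algebra_def by auto

lemma bicommutant: "commutant (commutant M) = M"
  using von_neumann unfolding von_neumann_algebra_def by auto

lemma op_add_mem: "a \<in> M \<Longrightarrow> b \<in> M \<Longrightarrow> op_add a b \<in> M"
  using commutant_op_add[OF commutant_subset_Bnd] bicommutant by metis

lemma op_smult_mem: "a \<in> M \<Longrightarrow> op_smult x a \<in> M"
  using commutant_op_smult[OF commutant_subset_Bnd] bicommutant by metis

lemma op_mult_mem: "a \<in> M \<Longrightarrow> b \<in> M \<Longrightarrow> op_mult a b \<in> M"
  using commutant_op_mult bicommutant by metis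

abbreviation Zun :: "'i op set" where "Zun \<equiv> ungraded_center M"

lemma ungraded_center_eq: "Zun = M \<inter> commutant M"
  using in_Bnd by (auto simp: ungraded_center_def commutant_def)

lemma center_mem: "a \<in> Zun \<Longrightarrow> a \<in> M"
  by (simp add: ungraded_center_def)

lemma center_commute: "a \<in> Zun \<Longrightarrow> b \<in> M \<Longrightarrow> op_mult a b = op_mult b a"
  by (simp add: ungraded_center_def)

lemma op_id_center: "op_id \<in> Zun"
  using op_id_mem by (simp add: ungraded_center_def in_Bnd op_mult_id_left op_mult_id_right)

lemma center_op_add: "a \<in> Zun \<Longrightarrow> b \<in> Zun \<Longrightarrow> op_add a b \<in> Zun"
  using op_add_mem commutant_op_add[OF in_Bnd[THEN subsetI]] by (simp add: ungraded_center_eq)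

lemma center_op_smult: "a \<in> Zun \<Longrightarrow> op_smult x a \<in> Zun"
  using op_smult_mem commutant_op_smult[OF in_Bnd[THEN subsetI]] by (simp add: ungraded_center_eq)

lemma center_op_mult: "a \<in> Zun \<Longrightarrow> b \<in> Zun \<Longrightarrow> op_mult a b \<in> Zun"
  by (simp add: ungraded_center_eq op_mult_mem commutant_op_mult)

lemma adjoint_center:
  assumes z: "z \<in> Zun" and S: "S \<in> M" "is_adjoint z S"
  shows "S \<in> Zun"
proof -
  have "op_mult b S = op_mult S b" if b: "b \<in> M" for b
  proof -
    obtain B where B: "B \<in> M" "is_adjoint b B"
      using adjoint_mem[OF b] by blast
    have "is_adjoint B b"
      using is_adjoint_sym[OF in_Bnd[OF b] B(2)] .
    then have "is_adjoint (op_mult z B) (op_mult b S)" "is_adjoint (op_mult B z) (op_mult S b)"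
      using is_adjoint_op_mult[OF in_Bnd[OF B(1)] S(2)]
        is_adjoint_op_mult[OF in_Bnd[OF center_mem[OF z]] _ S(2)] by auto
    moreover have "op_mult z B = op_mult B z"
      using center_commute[OF z B(1)] .
    ultimately show ?thesis
      using is_adjoint_unique by metis
  qed
  then show ?thesis
    using S(1) by (simp add: ungraded_center_def)
qed

end

locale super_vN_alg =
  fixes M :: "'i op set" and \<gamma> :: "'i op \<Rightarrow> 'i op"
  assumes super_vN: "super_vN_algebra M \<gamma>"
begin

sublocale vN_alg M
  using super_vN by unfold_locales (simp add: super_vN_algebra_def)

lemma grading_mem: "a \<in> M \<Longrightarrow> \<gamma> a \<in> M"
  using super_vN unfolding super_vN_algebra_def star_automorphism_def bij_betw_def by auto

lemma grading_op_add: "a \<in> M \<Longrightarrow> b \<in> M \<Longrightarrow> \<gamma> (op_add a b) = op_add (\<gamma> a) (\<gamma> b)"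
  using super_vN unfolding super_vN_algebra_def star_automorphism_def by auto

lemma grading_op_smult: "a \<in> M \<Longrightarrow> \<gamma> (op_smult c a) = op_smult c (\<gamma> a)"
  using super_vN unfolding super_vN_algebra_def star_automorphism_def by auto

lemma grading_op_mult: "a \<in> M \<Longrightarrow> b \<in> M \<Longrightarrow> \<gamma> (op_mult a b) = op_mult (\<gamma> a) (\<gamma> b)"
  using super_vN unfolding super_vN_algebra_def star_automorphism_def by auto

lemma grading_op_id: "\<gamma> op_id = op_id"
  using super_vN unfolding super_vN_algebra_def star_automorphism_def by auto

lemma grading_adjoint: "a \<in> M \<Longrightarrow> b \<in> M \<Longrightarrow> is_adjoint a b \<Longrightarrow> is_adjoint (\<gamma> a) (\<gamma> b)"
  using super_vN unfolding super_vN_algebra_def star_automorphism_def by auto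

lemma grading_involutive: "a \<in> M \<Longrightarrow> \<gamma> (\<gamma> a) = a"
  using super_vN unfolding super_vN_algebra_def by auto

lemma grading_scalar: "\<gamma> (op_smult c op_id) = op_smult c op_id"
  using grading_op_smult[OF op_id_mem] grading_op_id by simp

lemma center_grading:
  assumes a: "a \<in> Zun"
  shows "\<gamma> a \<in> Zun"
proof -
  have "op_mult (\<gamma> a) b = op_mult b (\<gamma> a)" if b: "b \<in> M" for b
  proof -
    have "op_mult (\<gamma> a) b = \<gamma> (op_mult a (\<gamma> b))"
      using grading_op_mult grading_involutive grading_mem center_mem[OF a] b by simp
    also have "\<dots> = \<gamma> (op_mult (\<gamma> b) a)"
      using center_commute[OF a grading_mem[OF b]] by simp
    also have "\<dots> = op_mult b (\<gamma> a)"
      using grading_op_mult grading_involutive grading_mem center_mem[OF a] b by simp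
    finally show ?thesis .
  qed
  then show ?thesis
    using grading_mem center_mem[OF a] by (simp add: ungraded_center_def)
qed

lemma graded_subalgebra_center: "graded_subalgebra M \<gamma> Zun"
  unfolding graded_subalgebra_def
  by (auto intro: center_mem op_id_center center_op_add center_op_mult center_op_smult center_grading)

lemma even_part_mem: "a \<in> M \<Longrightarrow> even_part \<gamma> a \<in> M"
  unfolding even_part_def by (intro op_smult_mem op_add_mem grading_mem)

lemma odd_part_mem: "a \<in> M \<Longrightarrow> odd_part \<gamma> a \<in> M"
  unfolding odd_part_def by (intro op_smult_mem op_add_mem grading_mem)

lemma even_part_center: "a \<in> Zun \<Longrightarrow> even_part \<gamma> a \<in> Zun"
  unfolding even_part_def by (intro center_op_smult center_op_add center_grading)

lemma odd_part_center: "a \<in> Zun \<Longrightarrow> odd_part \<gamma> a \<in> Zun"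
  unfolding odd_part_def by (intro center_op_smult center_op_add center_grading)

lemma grading_even_part: "a \<in> M \<Longrightarrow> \<gamma> (even_part \<gamma> a) = even_part \<gamma> a"
  unfolding even_part_def
  by (simp add: grading_mem grading_op_smult grading_op_add op_add_mem grading_involutive)
     (simp add: op_smult_def op_add_def fun_eq_iff algebra_simps)

lemma grading_odd_part: "a \<in> M \<Longrightarrow> \<gamma> (odd_part \<gamma> a) = op_smult (-1) (odd_part \<gamma> a)"
  unfolding odd_part_def
  by (simp add: grading_mem grading_op_smult grading_op_add op_add_mem op_smult_mem grading_involutive)
     (simp add: op_smult_def op_add_def fun_eq_iff algebra_simps)

definition odd_central :: "'i op \<Rightarrow> bool" where
  "odd_central z \<longleftrightarrow> z \<in> Zun \<and> \<gamma> z = op_smult (-1) z"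

lemma odd_part_odd_central: "a \<in> Zun \<Longrightarrow> odd_central (odd_part \<gamma> a)"
  by (simp add: odd_central_def odd_part_center grading_odd_part center_mem)

text \<open>The odd part of \<open>a\<close> vanishes, so every graded commutator with \<open>a\<close> is an ordinary one.\<close>
lemma even_center_graded_center:
  assumes a: "a \<in> Zun" "\<gamma> a = a"
  shows "a \<in> graded_center M \<gamma>"
proof -
  have "super_comm \<gamma> a b = op_zero" if b: "b \<in> M" for b
  proof -
    have "even_part \<gamma> a = a" "odd_part \<gamma> a = op_zero"
      unfolding even_part_def odd_part_def a(2) by (simp_all add: op_smult_def op_add_def op_zero_def fun_eq_iff)
    moreover have "op_mult a (even_part \<gamma> b) = op_mult (even_part \<gamma> b) a"
      "op_mult a (odd_part \<gamma> b) = op_mult (odd_part \<gamma> b) a"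
      using center_commute[OF a(1)] even_part_mem[OF b] odd_part_mem[OF b] by auto
    ultimately show ?thesis
      using in_Bnd[OF even_part_mem[OF b]] in_Bnd[OF odd_part_mem[OF b]]
      by (simp add: super_comm_def op_comm_def op_anticomm_def op_mult_zero_right)
         (simp add: op_add_def op_smult_def op_zero_def fun_eq_iff)
  qed
  then show ?thesis
    using center_mem[OF a(1)] by (simp add: graded_center_def)
qed

lemma odd_central_mult_even:
  assumes w: "odd_central w" and v: "odd_central v"
  shows "op_mult w v \<in> Zun" "\<gamma> (op_mult w v) = op_mult w v"
proof -
  have wv: "w \<in> Zun" "v \<in> Zun"
    using w v by (simp_all add: odd_central_def)
  then show "op_mult w v \<in> Zun"
    by (rule center_op_mult)
  have "\<gamma> (op_mult w v) = op_mult (op_smult (-1) w) (op_smult (-1) v)"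
    using grading_op_mult[OF center_mem center_mem, OF wv] w v by (simp add: odd_central_def)
  also have "\<dots> = op_mult w v"
    using in_Bnd[OF center_mem[OF wv(1)]]
    by (simp add: op_mult_smult_left op_mult_smult_right)
       (simp add: op_smult_def fun_eq_iff)
  finally show "\<gamma> (op_mult w v) = op_mult w v" .
qed

lemma odd_central_adjoint:
  assumes z: "odd_central z" and S: "S \<in> M" "is_adjoint z S"
  shows "odd_central S"
proof -
  have zM: "z \<in> M"
    using z center_mem by (simp add: odd_central_def)
  have "is_adjoint (op_smult (-1) z) (\<gamma> S)"
    using grading_adjoint[OF zM S] z by (simp add: odd_central_def)
  moreover have "is_adjoint (op_smult (-1) z) (op_smult (-1) S)"
    using is_adjoint_op_smult[OF S(2), of "-1"] by simp
  ultimately have "\<gamma> S = op_smult (-1) S"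
    by (rule is_adjoint_unique)
  moreover have "S \<in> Zun"
    using adjoint_center z S unfolding odd_central_def by blast
  ultimately show ?thesis
    by (simp add: odd_central_def)
qed

lemma grading_op_comb:
  "u \<in> M \<Longrightarrow> \<gamma> u = op_smult (-1) u \<Longrightarrow> \<gamma> (op_comb p q u) = op_comb p (-q) u"
  unfolding op_comb_def
  by (simp add: grading_op_add grading_op_smult op_smult_mem op_id_mem grading_scalar)
     (simp add: op_add_def op_smult_def fun_eq_iff)

lemma op_comb_center: "u \<in> Zun \<Longrightarrow> op_comb p q u \<in> Zun"
  unfolding op_comb_def by (intro center_op_add center_op_smult op_id_center)

end

locale super_factor = super_vN_alg +
  assumes graded_center_scalars: "graded_center M \<gamma> = {op_smult c op_id | c. True}"
begin

lemma even_center_scalar: "a \<in> Zun \<Longrightarrow> \<gamma> a = a \<Longrightarrow> \<exists>c. a = op_smult c op_id"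
  using even_center_graded_center graded_center_scalars by blast

lemma odd_central_mult_scalar:
  "odd_central w \<Longrightarrow> odd_central v \<Longrightarrow> \<exists>d. op_mult w v = op_smult d op_id"
  using even_center_scalar odd_central_mult_even by blast

lemma center_decomp: "a \<in> Zun \<Longrightarrow> \<exists>c. a = op_add (op_smult c op_id) (odd_part \<gamma> a)"
  using even_center_scalar[OF even_part_center grading_even_part[OF center_mem]]
    even_part_add_odd_part by metis

lemma odd_central_square_nonzero:
  assumes z: "odd_central z" "z \<noteq> op_zero"
  shows "\<exists>e. e \<noteq> 0 \<and> op_mult z z = op_smult e op_id"
proof -
  have zZ: "z \<in> Zun" and zB: "z \<in> Bnd"
    using z(1) in_Bnd center_mem by (auto simp: odd_central_def)
  obtain S where S: "S \<in> M" "is_adjoint z S"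
    using adjoint_mem[OF center_mem[OF zZ]] by blast
  obtain c where c: "op_mult z S = op_smult c op_id"
    using odd_central_mult_scalar[OF z(1) odd_central_adjoint[OF z(1) S]] by blast
  have "c \<noteq> 0"
  proof
    assume "c = 0"
    then have "op_mult S z = op_zero"
      using c center_commute[OF zZ S(1)] by (simp add: op_smult_def op_zero_def fun_eq_iff)
    then show False
      using adjoint_mult_eq_zero_imp_zero[OF zB S(2)] z(2) by simp
  qed
  obtain e where e: "op_mult z z = op_smult e op_id"
    using odd_central_mult_scalar[OF z(1) z(1)] by blast
  \<comment> \<open>Evaluate \<open>z z S\<close> in two ways: \<open>z (z S) = c z\<close> and \<open>(z z) S = e S\<close>.\<close>
  have "op_smult c z = op_smult e S"
  proof -
    have "op_smult c z = op_mult z (op_mult z S)"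
      by (simp add: c op_mult_smult_right[OF zB] op_mult_id_right[OF zB])
    also have "\<dots> = op_smult e S"
      by (simp flip: op_mult_assoc add: e op_mult_smult_left op_mult_id_left in_Bnd[OF S(1)])
    finally show ?thesis .
  qed
  then have "e \<noteq> 0"
    using \<open>c \<noteq> 0\<close> z(2) by (auto simp: op_smult_def op_zero_def fun_eq_iff)
  then show ?thesis
    using e by blast
qed

lemma odd_central_unit:
  assumes "odd_central z" "z \<noteq> op_zero"
  shows "\<exists>u. odd_central u \<and> op_mult u u = op_id"
proof -
  obtain e where e: "e \<noteq> 0" "op_mult z z = op_smult e op_id"
    using odd_central_square_nonzero[OF assms] by blast
  have zZ: "z \<in> Zun" and z_odd: "\<gamma> z = op_smult (-1) z"
    using assms(1) by (simp_all add: odd_central_def)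
  define u where "u = op_smult (1 / csqrt e) z"
  have "odd_central u"
    using center_op_smult[OF zZ] grading_op_smult[OF center_mem[OF zZ]] z_odd
    by (simp add: odd_central_def u_def) (simp add: op_smult_def fun_eq_iff)
  moreover have "op_mult u u = op_smult (1 / (csqrt e * csqrt e)) (op_mult z z)"
    using in_Bnd[OF center_mem[OF zZ]]
    by (simp add: u_def op_mult_smult_left op_mult_smult_right) (simp add: op_smult_def fun_eq_iff)
  then have "op_mult u u = op_id"
    using e by (simp flip: power2_eq_square) (simp add: op_smult_def fun_eq_iff)
  ultimately show ?thesis
    by blast
qed

context
  fixes u
  assumes u_odd: "odd_central u" and u_square: "op_mult u u = op_id"
begin

lemma odd_central_eq_smult_unit:
  assumes "odd_central w"
  shows "\<exists>d. w = op_smult d u"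
proof -
  obtain d where d: "op_mult w u = op_smult d op_id"
    using odd_central_mult_scalar[OF assms u_odd] by blast
  have B: "w \<in> Bnd" "u \<in> Bnd"
    using assms u_odd in_Bnd center_mem by (auto simp: odd_central_def)
  have "w = op_mult (op_mult w u) u"
    by (simp add: op_mult_assoc u_square op_mult_id_right[OF B(1)])
  also have "\<dots> = op_smult d u"
    by (simp add: d op_mult_smult_left op_mult_id_left[OF B(2)])
  finally show ?thesis ..
qed

lemma center_eq_op_comb: "a \<in> Zun \<Longrightarrow> \<exists>p q. a = op_comb p q u"
  using center_decomp odd_central_eq_smult_unit[OF odd_part_odd_central] unfolding op_comb_def
  by metis

lemma op_comb_inj:
  assumes "op_comb p q u = op_comb p' q' u"
  shows "p = p'" "q = q'"
proof -
  have u: "u \<in> M" "\<gamma> u = op_smult (-1) u"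
    using u_odd center_mem by (auto simp: odd_central_def)
  have "op_add (op_comb a b u) (op_comb a (-b) u) = op_smult (2 * a) op_id" for a b
    by (simp add: op_comb_def op_add_def op_smult_def fun_eq_iff)
  then have "op_smult (2 * p) (op_id :: 'a op) = op_smult (2 * p') op_id"
    using assms grading_op_comb[OF u] by metis
  then show p: "p = p'"
    by (auto dest: op_smult_op_id_inj)
  have "op_smult q u = op_smult q' u"
    using assms unfolding p by (simp add: op_comb_def op_add_def op_smult_def fun_eq_iff)
  then have "op_smult q (op_mult u u) = op_smult q' (op_mult u u)"
    by (metis op_mult_smult_right in_Bnd[OF u(1)])
  then show "q = q'"
    by (auto simp: u_square dest: op_smult_op_id_inj)
qed

lemma CC_embed_grading: "\<gamma> (CC_embed u (s, t)) = CC_embed u (t, s)"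
  using u_odd center_mem
  by (simp add: CC_embed_def odd_central_def grading_op_comb)
     (intro arg_cong2[where f = "\<lambda>p q. op_comb p q u"]; simp add: field_simps)

lemma center_eq_range_CC_embed: "Zun = range (CC_embed u)"
proof -
  have "CC_embed u x \<in> Zun" for x
    unfolding CC_embed_def using u_odd by (intro op_comb_center) (simp add: odd_central_def)
  moreover have "a \<in> range (CC_embed u)" if "a \<in> Zun" for a
    using center_eq_op_comb[OF that] op_comb_eq_CC_embed by (metis rangeI)
  ultimately show ?thesis
    by blast
qed

lemma inj_CC_embed: "inj (CC_embed u)"
proof (rule injI)
  fix x y :: "complex \<times> complex"
  assume "CC_embed u x = CC_embed u y"
  then have "op_comb ((fst x + snd x) / 2) ((fst x - snd x) / 2) u
      = op_comb ((fst y + snd y) / 2) ((fst y - snd y) / 2) u"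
    by (simp add: CC_embed_def)
  note coeffs = op_comb_inj[OF this]
  have "a = (a + b) / 2 + (a - b) / 2" "b = (a + b) / 2 - (a - b) / 2" for a b :: complex
    by (simp_all add: field_simps)
  then show "x = y"
    using coeffs by (metis prod_eqI)
qed

lemma center_iso_CC: "\<exists>\<phi>. iso_to_CC Zun \<gamma> \<phi>"
proof -
  have "bij_betw (CC_embed u) UNIV Zun"
    by (simp add: bij_betw_def inj_CC_embed center_eq_range_CC_embed)
  moreover have "u \<in> Bnd"
    using u_odd in_Bnd center_mem by (simp add: odd_central_def)
  ultimately have "iso_to_CC Zun \<gamma> (inv_into UNIV (CC_embed u))"
    unfolding iso_to_CC_def
    by (intro super_alg_iso_inv_into)
       (auto simp: CC_embed_add CC_embed_smult CC_embed_mult u_square CC_embed_one CC_embed_grading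
         simp flip: prod.collapse split: prod.splits)
  then show ?thesis
    by blast
qed

end

lemma center_iso_C:
  assumes "\<And>z. odd_central z \<Longrightarrow> z = op_zero"
  shows "\<exists>\<phi>. iso_to_C Zun \<gamma> \<phi>"
proof -
  have "Zun = range (\<lambda>c. op_smult c op_id)"
  proof
    show "Zun \<subseteq> range (\<lambda>c. op_smult c op_id)"
    proof
      fix a assume a: "a \<in> Zun"
      then obtain c where "a = op_add (op_smult c op_id) (odd_part \<gamma> a)"
        using center_decomp by blast
      also have "\<dots> = op_smult c op_id"
        using assms[OF odd_part_odd_central[OF a]] by (simp add: op_add_def op_zero_def)
      finally show "a \<in> range (\<lambda>c. op_smult c op_id)" by blast
    qed
    show "range (\<lambda>c. op_smult c op_id) \<subseteq> Zun"
      using center_op_smult[OF op_id_center] by auto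
  qed
  then have "bij_betw (\<lambda>c. op_smult c op_id) UNIV Zun"
    by (auto simp: bij_betw_def intro: injI op_smult_op_id_inj)
  then have "iso_to_C Zun \<gamma> (inv_into UNIV (\<lambda>c. op_smult c op_id))"
    unfolding iso_to_C_def
  proof (rule super_alg_iso_inv_into)
  qed (simp_all add: grading_scalar op_mult_smult_left op_mult_smult_right Bnd_op_id op_mult_id_left,
       simp_all add: op_add_def op_smult_def fun_eq_iff algebra_simps)
  then show ?thesis
    by blast
qed

end

theorem lemma2p2:
  fixes M :: "'i op set" and \<gamma> :: "'i op \<Rightarrow> 'i op"
  assumes "super_vN_algebra M \<gamma>"
    and "graded_center M \<gamma> = {op_smult c op_id | c. True}"
  shows "graded_subalgebra M \<gamma> (ungraded_center M) \<and>
    ((\<exists>\<phi>. iso_to_C (ungraded_center M) \<gamma> \<phi>) \<or>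
     (\<exists>\<phi>. iso_to_CC (ungraded_center M) \<gamma> \<phi>))"
proof -
  interpret super_factor M \<gamma>
    using assms by (simp add: super_factor_def super_factor_axioms_def super_vN_alg_def)
  have "(\<exists>\<phi>. iso_to_C Zun \<gamma> \<phi>) \<or> (\<exists>\<phi>. iso_to_CC Zun \<gamma> \<phi>)"
  proof (cases "\<exists>z. odd_central z \<and> z \<noteq> op_zero")
    case True
    then obtain u where "odd_central u" "op_mult u u = op_id"
      using odd_central_unit by blast
    then show ?thesis
      using center_iso_CC by blast
  next
    case False
    then show ?thesis
      using center_iso_C by blast
  qed
  then show ?thesis
    using graded_subalgebra_center by blast
qed

end
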